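(* Let $k$ be a positive integer and let $n \geq (k-1)^3+1$. Then $\textup{Sav}_n(12\cdots k)=0$; that is, for every permutation $p$ of $\{1,\dots,n\}$, at least one of $p$ and $p^2$ contains the pattern $12\cdots k$.
   Context: A permutation $p$ of length $n$ is written in one-line notation $p=p_1p_2\cdots p_n$, with $p_i=p(i)$. A permutation $p$ contains a pattern $q=q_1\cdots q_k$ (itself a permutation of $\{1,\dots,k\}$) if there are indices $i_1<\cdots<i_k$ such that $p_{i_r}<p_{i_s}$ if and only if $q_r<q_s$; otherwise $p$ avoids $q$. The square $p^2$ is the composition $p^2(i)=p(p(i))$. A permutation $p$ is strongly $q$-avoiding if both $p$ and $p^2$ avoid $q$, and $\textup{Sav}_n(q)$ denotes the number of strongly $q$-avoiding permutations of length $n$. $12\cdots k$ denotes the increasing pattern of length $k$. *)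

theory Defs
  imports "HOL-Combinatorics.Permutations"
begin

text \<open>Permutations of length n are bijections p of {1..n} (p permutes {1..n}),
  one-line notation p_i = p i. A pattern q of length k is a permutation of {1..k}.\<close>

definition contains_pattern :: "nat \<Rightarrow> (nat \<Rightarrow> nat) \<Rightarrow> nat \<Rightarrow> (nat \<Rightarrow> nat) \<Rightarrow> bool" where
  "contains_pattern n p k q \<longleftrightarrow>
     (\<exists>i :: nat \<Rightarrow> nat. (\<forall>r\<in>{1..k}. i r \<in> {1..n}) \<and>
        (\<forall>r\<in>{1..k}. \<forall>s\<in>{1..k}. r < s \<longrightarrow> i r < i s) \<and>
        (\<forall>r\<in>{1..k}. \<forall>s\<in>{1..k}. p (i r) < p (i s) \<longleftrightarrow> q r < q s))"

definition avoids_pattern :: "nat \<Rightarrow> (nat \<Rightarrow> nat) \<Rightarrow> nat \<Rightarrow> (nat \<Rightarrow> nat) \<Rightarrow> bool" where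
  "avoids_pattern n p k q \<longleftrightarrow> \<not> contains_pattern n p k q"

definition incr_pattern :: "nat \<Rightarrow> nat" where
  "incr_pattern = id"

definition strongly_avoiding :: "nat \<Rightarrow> (nat \<Rightarrow> nat) \<Rightarrow> nat \<Rightarrow> (nat \<Rightarrow> nat) \<Rightarrow> bool" where
  "strongly_avoiding n p k q \<longleftrightarrow> avoids_pattern n p k q \<and> avoids_pattern n (p \<circ> p) k q"

definition Sav :: "nat \<Rightarrow> nat \<Rightarrow> (nat \<Rightarrow> nat) \<Rightarrow> nat" where
  "Sav n k q = card {p. p permutes {1..n} \<and> strongly_avoiding n p k q}"

end

theory Submission
  imports Defs
begin

text \<open>Label each position j by the length of the longest increasing subsequence of p ending
  at j. Along an ascent i < j, p i < p j these labels increase strictly, and if p avoids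
  12...k they lie in {1..k-1}. For i < j, one of p i < p j, p (p i) < p (p j), or
  p j < p i together with p (p j) < p (p i) holds, so the triple of labels of j for p,
  of j for p \<circ> p and of p j for p separates i from j. Hence n \<le> (k-1)^3.\<close>

definition incr_subseq_ending :: "nat \<Rightarrow> (nat \<Rightarrow> nat) \<Rightarrow> nat \<Rightarrow> nat \<Rightarrow> bool" where
  "incr_subseq_ending n f m j \<longleftrightarrow>
     (\<exists>idx :: nat \<Rightarrow> nat. (\<forall>r\<in>{1..m}. idx r \<in> {1..n}) \<and>
        (\<forall>r\<in>{1..m}. \<forall>s\<in>{1..m}. r < s \<longrightarrow> idx r < idx s \<and> f (idx r) < f (idx s)) \<and>
        idx m = j)"

definition lis_ending :: "nat \<Rightarrow> (nat \<Rightarrow> nat) \<Rightarrow> nat \<Rightarrow> nat" where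
  "lis_ending n f j = Max {m. incr_subseq_ending n f m j}"

lemma incr_subseq_ending_length_le:
  assumes "incr_subseq_ending n f m j"
  shows "m \<le> n"
proof -
  obtain idx where into: "\<forall>r\<in>{1..m}. idx r \<in> {1..n}"
    and mono: "\<forall>r\<in>{1..m}. \<forall>s\<in>{1..m}. r < s \<longrightarrow> idx r < idx s \<and> f (idx r) < f (idx s)"
    using assms unfolding incr_subseq_ending_def by blast
  have "inj_on idx {1..m}"
    using mono by (intro linorder_inj_onI') (metis less_irrefl)
  then have "card {1..m} \<le> card {1..n}"
    using into by (intro card_inj_on_le) auto
  then show ?thesis by simp
qed

lemma incr_subseq_ending_singleton: "j \<in> {1..n} \<Longrightarrow> incr_subseq_ending n f 1 j"
  unfolding incr_subseq_ending_def by (rule exI[of _ "\<lambda>_. j"]) auto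

lemma incr_subseq_ending_snoc:
  assumes "incr_subseq_ending n f m i" "i < j" "j \<in> {1..n}" "f i < f j"
  shows "incr_subseq_ending n f (Suc m) j"
proof -
  obtain idx where into: "\<forall>r\<in>{1..m}. idx r \<in> {1..n}"
    and mono: "\<forall>r\<in>{1..m}. \<forall>s\<in>{1..m}. r < s \<longrightarrow> idx r < idx s \<and> f (idx r) < f (idx s)"
    and last: "idx m = i"
    using assms(1) unfolding incr_subseq_ending_def by blast
  have below_i: "idx r \<le> i \<and> f (idx r) \<le> f i" if "r \<in> {1..m}" for r
  proof (cases "r = m")
    case False
    with that have "r < m" by simp
    with that mono last show ?thesis by fastforce
  qed (simp add: last)
  define idx' where "idx' = idx(Suc m := j)"
  have "\<forall>r\<in>{1..Suc m}. \<forall>s\<in>{1..Suc m}. r < s \<longrightarrow> idx' r < idx' s \<and> f (idx' r) < f (idx' s)"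
  proof (intro ballI impI)
    fix r s assume r: "r \<in> {1..Suc m}" and s: "s \<in> {1..Suc m}" and "r < s"
    then have r': "r \<in> {1..m}" by auto
    show "idx' r < idx' s \<and> f (idx' r) < f (idx' s)"
    proof (cases "s = Suc m")
      case True
      then show ?thesis using below_i[OF r'] assms(2,4) \<open>r < s\<close> by (auto simp: idx'_def)
    next
      case False
      with s have "s \<in> {1..m}" by auto
      then show ?thesis using mono r' \<open>r < s\<close> False by (auto simp: idx'_def)
    qed
  qed
  moreover have "\<forall>r\<in>{1..Suc m}. idx' r \<in> {1..n}"
    using into assms(3) by (auto simp: idx'_def)
  ultimately show ?thesis
    unfolding incr_subseq_ending_def by (intro exI[of _ idx']) (simp add: idx'_def)
qed

lemma incr_subseq_ending_contains_incr_pattern: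
  assumes "incr_subseq_ending n f m j" "k \<le> m"
  shows "contains_pattern n f k incr_pattern"
proof -
  obtain idx where into: "\<forall>r\<in>{1..m}. idx r \<in> {1..n}"
    and mono: "\<forall>r\<in>{1..m}. \<forall>s\<in>{1..m}. r < s \<longrightarrow> idx r < idx s \<and> f (idx r) < f (idx s)"
    using assms(1) unfolding incr_subseq_ending_def by blast
  have "f (idx r) < f (idx s) \<longleftrightarrow> incr_pattern r < incr_pattern s"
    if "r \<in> {1..k}" "s \<in> {1..k}" for r s
    using mono that assms(2) unfolding incr_pattern_def
    by (cases r s rule: linorder_cases) (auto dest: order.asym)
  then show ?thesis
    unfolding contains_pattern_def using into mono assms(2) by (intro exI[of _ idx]) auto
qed

lemma lis_ending:
  assumes "j \<in> {1..n}"
  shows "incr_subseq_ending n f (lis_ending n f j) j"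
    and "incr_subseq_ending n f m j \<Longrightarrow> m \<le> lis_ending n f j"
    and "1 \<le> lis_ending n f j"
proof -
  have fin: "finite {m. incr_subseq_ending n f m j}"
    by (rule finite_subset[of _ "{..n}"]) (auto dest: incr_subseq_ending_length_le)
  have one: "1 \<in> {m. incr_subseq_ending n f m j}"
    using incr_subseq_ending_singleton[OF assms] by simp
  show "incr_subseq_ending n f (lis_ending n f j) j"
    using Max_in[OF fin] one unfolding lis_ending_def by auto
  show "m \<le> lis_ending n f j" if "incr_subseq_ending n f m j"
    using Max_ge[OF fin] that unfolding lis_ending_def by simp
  show "1 \<le> lis_ending n f j"
    using Max_ge[OF fin one] unfolding lis_ending_def .
qed

lemma lis_ending_less_of_avoids:
  assumes "avoids_pattern n f k incr_pattern" "j \<in> {1..n}"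
  shows "lis_ending n f j < k"
  using incr_subseq_ending_contains_incr_pattern[OF lis_ending(1)[OF assms(2)]] assms(1)
  unfolding avoids_pattern_def by (meson not_le)

lemma lis_ending_strict_mono:
  assumes "i \<in> {1..n}" "j \<in> {1..n}" "i < j" "f i < f j"
  shows "lis_ending n f i < lis_ending n f j"
  using lis_ending(2)[OF assms(2) incr_subseq_ending_snoc[OF lis_ending(1)[OF assms(1)] assms(3,2,4)]]
  by simp

lemma lis_ending_triple_inj_on:
  assumes "p permutes {1..n}"
  shows "inj_on (\<lambda>j. (lis_ending n p j, lis_ending n (p \<circ> p) j, lis_ending n p (p j))) {1..n}"
    (is "inj_on ?T _")
proof -
  have separated: "?T i \<noteq> ?T j" if i: "i \<in> {1..n}" and j: "j \<in> {1..n}" and "i < j" for i j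
  proof
    assume eq: "?T i = ?T j"
    have "p i \<noteq> p j" "p (p i) \<noteq> p (p j)"
      using \<open>i < j\<close> permutes_inj[OF assms] by (metis inj_eq less_irrefl)+
    moreover have "\<not> p i < p j" "\<not> (p \<circ> p) i < (p \<circ> p) j"
      using lis_ending_strict_mono[OF i j \<open>i < j\<close>, of p] eq
        lis_ending_strict_mono[OF i j \<open>i < j\<close>, of "p \<circ> p"] by auto
    ultimately have "p j < p i" "p (p j) < p (p i)" by auto
    then have "lis_ending n p (p j) < lis_ending n p (p i)"
      using permutes_in_image[OF assms] i j by (intro lis_ending_strict_mono) auto
    then show False using eq by simp
  qed
  show ?thesis
    using separated by (rule linorder_inj_onI')
qed

lemma length_le_of_strongly_avoiding_incr_pattern:
  assumes "p permutes {1..n}" "strongly_avoiding n p k incr_pattern"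
  shows "n \<le> (k - 1) ^ 3"
proof -
  let ?T = "\<lambda>j. (lis_ending n p j, lis_ending n (p \<circ> p) j, lis_ending n p (p j))"
  have "lis_ending n f j \<in> {1..k - 1}"
    if "avoids_pattern n f k incr_pattern" "j \<in> {1..n}" for f j
    using lis_ending(3)[OF that(2)] lis_ending_less_of_avoids[OF that] by auto
  then have "?T ` {1..n} \<subseteq> {1..k - 1} \<times> {1..k - 1} \<times> {1..k - 1}"
    using assms permutes_in_image[OF assms(1)]
    unfolding strongly_avoiding_def by auto
  then have "card {1..n} \<le> card ({1..k - 1} \<times> {1..k - 1} \<times> {1..k - 1})"
    using lis_ending_triple_inj_on[OF assms(1)] by (intro card_inj_on_le) auto
  then show ?thesis by (simp add: card_cartesian_product power3_eq_cube)
qed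

theorem theorem2p1:
  fixes k n :: nat
  assumes "k \<ge> 1" and "n \<ge> (k - 1) ^ 3 + 1"
  shows "Sav n k incr_pattern = 0"
proof -
  have "{p. p permutes {1..n} \<and> strongly_avoiding n p k incr_pattern} = {}"
    using length_le_of_strongly_avoiding_incr_pattern assms(2) by fastforce
  then show ?thesis unfolding Sav_def by (simp only: card.empty)
qed

end
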